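(* Under the setting and assumptions in the context, $$\max_{z\in\{0,1\}}\Pr(Y=1,R=0\mid Z=z)\ \le\ \Pr(Y(0)=1)\ \le\ \min_{z\in\{0,1\}}\Pr(Y=1\mid Z=z),$$ $$\max_{z\in\{0,1\}}\Pr(Y=1\mid Z=z)\ \le\ \Pr(Y(1)=1)\ \le\ 1-\max_{z\in\{0,1\}}\Pr(Y=0,R=1\mid Z=z).$$
   Context: Units are drawn from a population (a probability space). Each unit has a binary assignment $Z\in\{0,1\}$ with $0<\Pr(Z=1)<1$, binary potential recommendations $R(0),R(1)\in\{0,1\}$, and binary potential outcomes $Y(0),Y(1)\in\{0,1\}$ indexed by the recommendation only (exclusion restriction). Observed quantities are $R=R(Z)$ and $Y=Y(R(Z))$. Assumptions: (Randomization) $Z$ is independent of $(R(0),R(1),Y(0),Y(1))$; (Monotonicity) $Y(1)\ge Y(0)$ almost surely. *)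

theory Defs
  imports "HOL-Probability.Probability"
begin

text \<open>Binary variables are modelled as bool-valued random variables (True = 1, False = 0).
Observed recommendation R = R(Z), observed outcome Y = Y(R(Z)).\<close>

definition obsR :: "('a \<Rightarrow> bool) \<Rightarrow> ('a \<Rightarrow> bool) \<Rightarrow> ('a \<Rightarrow> bool) \<Rightarrow> 'a \<Rightarrow> bool" where
  "obsR Z R0 R1 \<omega> = (if Z \<omega> then R1 \<omega> else R0 \<omega>)"

definition obsY :: "('a \<Rightarrow> bool) \<Rightarrow> ('a \<Rightarrow> bool) \<Rightarrow> ('a \<Rightarrow> bool)
    \<Rightarrow> ('a \<Rightarrow> bool) \<Rightarrow> ('a \<Rightarrow> bool) \<Rightarrow> 'a \<Rightarrow> bool" where
  "obsY Z R0 R1 Y0 Y1 \<omega> = (if obsR Z R0 R1 \<omega> then Y1 \<omega> else Y0 \<omega>)"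

end

theory Submission
  imports Defs
begin

text \<open>Given \<open>Z = z\<close>, independence identifies each observed conditional probability with the
probability of an event about arm \<open>z\<close> alone, on which \<open>R = R(z)\<close> and \<open>Y = Y(R(z))\<close>.
Monotonicity squeezes \<open>Y(R(z))\<close> between \<open>Y(0)\<close> and \<open>Y(1)\<close>, while
\<open>Y(0) \<and> \<not> R(z)\<close> lies inside \<open>Y(0)\<close> and \<open>\<not> Y(1) \<and> R(z)\<close> inside \<open>\<not> Y(1)\<close>.\<close>

lemma (in prob_space) cond_prob_eq_prob_if_independent:
  assumes indep: "\<P>(\<omega> in M. C \<omega> \<and> T \<omega> \<in> B) = \<P>(\<omega> in M. C \<omega>) * \<P>(\<omega> in M. T \<omega> \<in> B)"
    and pos: "0 < \<P>(\<omega> in M. C \<omega>)"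
    and agree: "\<And>\<omega>. C \<omega> \<Longrightarrow> P \<omega> = (T \<omega> \<in> B)"
  shows "cond_prob M P C = \<P>(\<omega> in M. T \<omega> \<in> B)"
proof -
  have "\<P>(\<omega> in M. P \<omega> \<and> C \<omega>) = \<P>(\<omega> in M. C \<omega> \<and> T \<omega> \<in> B)"
    using agree by (intro arg_cong[where f=prob]) blast
  with indep pos show ?thesis
    by (simp add: cond_prob_def)
qed

lemma (in prob_space) prob_mono_AE:
  assumes "AE \<omega> in M. P \<omega> \<longrightarrow> Q \<omega>" and "Measurable.pred M Q"
  shows "\<P>(\<omega> in M. P \<omega>) \<le> \<P>(\<omega> in M. Q \<omega>)"
  using assms by (intro finite_measure_mono_AE) auto

lemma (in prob_space) prob_switched_outcome_bounds:
  assumes [measurable]: "Measurable.pred M r" "Measurable.pred M Y0" "Measurable.pred M Y1"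
    and mono: "AE \<omega> in M. Y0 \<omega> \<longrightarrow> Y1 \<omega>"
  shows "\<P>(\<omega> in M. \<not> r \<omega> \<and> Y0 \<omega>) \<le> \<P>(\<omega> in M. Y0 \<omega>)"
    and "\<P>(\<omega> in M. Y0 \<omega>) \<le> \<P>(\<omega> in M. if r \<omega> then Y1 \<omega> else Y0 \<omega>)"
    and "\<P>(\<omega> in M. if r \<omega> then Y1 \<omega> else Y0 \<omega>) \<le> \<P>(\<omega> in M. Y1 \<omega>)"
    and "\<P>(\<omega> in M. Y1 \<omega>) \<le> 1 - \<P>(\<omega> in M. r \<omega> \<and> \<not> Y1 \<omega>)"
proof -
  show "\<P>(\<omega> in M. \<not> r \<omega> \<and> Y0 \<omega>) \<le> \<P>(\<omega> in M. Y0 \<omega>)"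
    by (rule prob_mono_AE) auto
  show "\<P>(\<omega> in M. Y0 \<omega>) \<le> \<P>(\<omega> in M. if r \<omega> then Y1 \<omega> else Y0 \<omega>)"
    using mono by (rule prob_mono_AE[OF AE_mp]) auto
  show "\<P>(\<omega> in M. if r \<omega> then Y1 \<omega> else Y0 \<omega>) \<le> \<P>(\<omega> in M. Y1 \<omega>)"
    using mono by (rule prob_mono_AE[OF AE_mp]) auto
  have "\<P>(\<omega> in M. r \<omega> \<and> \<not> Y1 \<omega>) \<le> \<P>(\<omega> in M. \<not> Y1 \<omega>)"
    by (rule prob_mono_AE) auto
  also have "\<dots> = 1 - \<P>(\<omega> in M. Y1 \<omega>)"
    by (rule prob_neg) measurable
  finally show "\<P>(\<omega> in M. Y1 \<omega>) \<le> 1 - \<P>(\<omega> in M. r \<omega> \<and> \<not> Y1 \<omega>)"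
    by simp
qed

lemma (in prob_space) observed_bounds_given_arm:
  assumes [measurable]: "Measurable.pred M r" "Measurable.pred M Y0" "Measurable.pred M Y1"
    and indep: "\<And>B. \<P>(\<omega> in M. C \<omega> \<and> (r \<omega>, Y0 \<omega>, Y1 \<omega>) \<in> B)
                   = \<P>(\<omega> in M. C \<omega>) * \<P>(\<omega> in M. (r \<omega>, Y0 \<omega>, Y1 \<omega>) \<in> B)"
    and pos: "0 < \<P>(\<omega> in M. C \<omega>)"
    and observed: "\<And>\<omega>. C \<omega> \<Longrightarrow> R \<omega> = r \<omega> \<and> Y \<omega> = (if r \<omega> then Y1 \<omega> else Y0 \<omega>)"
    and mono: "AE \<omega> in M. Y0 \<omega> \<longrightarrow> Y1 \<omega>"
  shows "\<P>(\<omega> in M. Y \<omega> \<and> \<not> R \<omega> \<bar> C \<omega>) \<le> \<P>(\<omega> in M. Y0 \<omega>)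
    \<and> \<P>(\<omega> in M. Y0 \<omega>) \<le> \<P>(\<omega> in M. Y \<omega> \<bar> C \<omega>)
    \<and> \<P>(\<omega> in M. Y \<omega> \<bar> C \<omega>) \<le> \<P>(\<omega> in M. Y1 \<omega>)
    \<and> \<P>(\<omega> in M. Y1 \<omega>) \<le> 1 - \<P>(\<omega> in M. \<not> Y \<omega> \<and> R \<omega> \<bar> C \<omega>)"
proof -
  have given_arm: "cond_prob M P C = \<P>(\<omega> in M. g (r \<omega>) (Y0 \<omega>) (Y1 \<omega>))"
    if "\<And>\<omega>. C \<omega> \<Longrightarrow> P \<omega> = g (r \<omega>) (Y0 \<omega>) (Y1 \<omega>)" for P g
    using cond_prob_eq_prob_if_independent[OF indep pos, of P "{(a, b, c). g a b c}"] that
    by simp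
  have "\<P>(\<omega> in M. Y \<omega> \<and> \<not> R \<omega> \<bar> C \<omega>) = \<P>(\<omega> in M. \<not> r \<omega> \<and> Y0 \<omega>)"
    by (rule given_arm) (auto dest: observed)
  moreover have "\<P>(\<omega> in M. Y \<omega> \<bar> C \<omega>) = \<P>(\<omega> in M. if r \<omega> then Y1 \<omega> else Y0 \<omega>)"
    by (rule given_arm) (auto dest: observed)
  moreover have "\<P>(\<omega> in M. \<not> Y \<omega> \<and> R \<omega> \<bar> C \<omega>) = \<P>(\<omega> in M. r \<omega> \<and> \<not> Y1 \<omega>)"
    by (rule given_arm) (auto dest: observed)
  ultimately show ?thesis
    using prob_switched_outcome_bounds[of r Y0 Y1] mono by simp
qed

theorem mainTheorem5:
  fixes M :: "'a measure" and Z R0 R1 Y0 Y1 :: "'a \<Rightarrow> bool"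
  assumes ps: "prob_space M"
    and meas: "Z \<in> measurable M (count_space UNIV)" "R0 \<in> measurable M (count_space UNIV)"
      "R1 \<in> measurable M (count_space UNIV)" "Y0 \<in> measurable M (count_space UNIV)"
      "Y1 \<in> measurable M (count_space UNIV)"
    and Zpos: "0 < \<P>(\<omega> in M. Z \<omega>)" and Zlt1: "\<P>(\<omega> in M. Z \<omega>) < 1"
    and rand: "\<forall>(A :: bool set) (B :: (bool \<times> bool \<times> bool \<times> bool) set).
                 \<P>(\<omega> in M. Z \<omega> \<in> A \<and> (R0 \<omega>, R1 \<omega>, Y0 \<omega>, Y1 \<omega>) \<in> B)
                 = \<P>(\<omega> in M. Z \<omega> \<in> A) * \<P>(\<omega> in M. (R0 \<omega>, R1 \<omega>, Y0 \<omega>, Y1 \<omega>) \<in> B)"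
    and mono: "AE \<omega> in M. Y0 \<omega> \<longrightarrow> Y1 \<omega>"
  defines "R \<equiv> obsR Z R0 R1" and "Y \<equiv> obsY Z R0 R1 Y0 Y1"
  shows "max (\<P>(\<omega> in M. Y \<omega> \<and> \<not> R \<omega> \<bar> Z \<omega>)) (\<P>(\<omega> in M. Y \<omega> \<and> \<not> R \<omega> \<bar> \<not> Z \<omega>))
           \<le> \<P>(\<omega> in M. Y0 \<omega>)
      \<and> \<P>(\<omega> in M. Y0 \<omega>)
           \<le> min (\<P>(\<omega> in M. Y \<omega> \<bar> Z \<omega>)) (\<P>(\<omega> in M. Y \<omega> \<bar> \<not> Z \<omega>))
      \<and> max (\<P>(\<omega> in M. Y \<omega> \<bar> Z \<omega>)) (\<P>(\<omega> in M. Y \<omega> \<bar> \<not> Z \<omega>))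
           \<le> \<P>(\<omega> in M. Y1 \<omega>)
      \<and> \<P>(\<omega> in M. Y1 \<omega>)
           \<le> 1 - max (\<P>(\<omega> in M. \<not> Y \<omega> \<and> R \<omega> \<bar> Z \<omega>)) (\<P>(\<omega> in M. \<not> Y \<omega> \<and> R \<omega> \<bar> \<not> Z \<omega>))"
proof -
  interpret prob_space M by (rule ps)
  note [measurable] = meas
  have Zneg_pos: "0 < \<P>(\<omega> in M. \<not> Z \<omega>)"
    using prob_neg[of Z] Zlt1 by simp
  have arm_indep: "\<P>(\<omega> in M. Z \<omega> = z \<and> (if z then R1 \<omega> else R0 \<omega>, Y0 \<omega>, Y1 \<omega>) \<in> B)
      = \<P>(\<omega> in M. Z \<omega> = z) * \<P>(\<omega> in M. (if z then R1 \<omega> else R0 \<omega>, Y0 \<omega>, Y1 \<omega>) \<in> B)" for z B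
    using rand[rule_format, of "{z}" "{(r0, r1, y0, y1). (if z then r1 else r0, y0, y1) \<in> B}"]
    by (cases z) simp_all
  have observed_treated: "R \<omega> = R1 \<omega> \<and> Y \<omega> = (if R1 \<omega> then Y1 \<omega> else Y0 \<omega>)" if "Z \<omega>" for \<omega>
    using that by (simp add: R_def Y_def obsR_def obsY_def)
  have observed_control: "R \<omega> = R0 \<omega> \<and> Y \<omega> = (if R0 \<omega> then Y1 \<omega> else Y0 \<omega>)" if "\<not> Z \<omega>" for \<omega>
    using that by (simp add: R_def Y_def obsR_def obsY_def)
  show ?thesis
    using observed_bounds_given_arm[OF meas(3-5) arm_indep[of True, simplified] Zpos observed_treated mono]
      observed_bounds_given_arm[OF meas(2,4,5) arm_indep[of False, simplified] Zneg_pos observed_control mono]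
    by (simp add: max_def)
qed

end
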